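(* Let $m\ge 1$ and $m_\alpha\ge 1$ be integers and $h\in\mathbb{R}$. Let $f_0\neq f_1$ be probability density functions on $\mathbb{R}$ and let $\{x_n\}_{n\ge1}$ be observed under the change-point model described in the context, with log-likelihood ratios $\mathrm{LLR}(i)=\ln\big(f_1(x_i)/f_0(x_i)\big)$, windowed sums $S_n=\sum_{i=n-m+1}^{n}\mathrm{LLR}(i)$ for $n\ge m$, and the finite moving average (FMA) stopping time $$T_{\mathrm{F}}(h)=\inf\{n\ge m:\ S_n\ge h\}.$$ Let $S_m=\sum_{i=1}^m \mathrm{LLR}(i)$. Then the worst-case probability of false alarm satisfies $$\mathbb{P}_{\mathrm{fa}}\big(T_{\mathrm{F}}(h),m_\alpha\big)\le \alpha(h,m_\alpha):=1-\big[\mathbb{P}_\infty(S_m<h)\big]^{m_\alpha},$$ and the worst-case probability of missed detection satisfies $$\mathbb{P}_{\mathrm{md}}\big(T_{\mathrm{F}}(h),m\big)\le \beta(h,m):=\mathbb{P}_1(S_m<h).$$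
   Context: Change-point model: for each $v\in\{1,2,\dots\}\cup\{\infty\}$, $\mathbb{P}_v$ is a probability measure under which the random variables $x_1,x_2,\dots$ are mutually independent, $x_n$ has density $f_0$ if $n<v$ or $n\ge v+m$, and $x_n$ has density $f_1$ if $v\le n<v+m$ (so under $\mathbb{P}_\infty$ all $x_n$ are i.i.d. with density $f_0$, and under $\mathbb{P}_1$ the samples $x_1,\dots,x_m$ have density $f_1$). The log-likelihood ratios are assumed to be well-defined real random variables. For a stopping time $T$ (with respect to the filtration generated by $x_1,x_2,\dots$): the worst-case probability of false alarm within a window of length $m_\alpha$ is $\mathbb{P}_{\mathrm{fa}}(T,m_\alpha)=\sup_{l\ge1}\mathbb{P}_\infty(l\le T<l+m_\alpha)$, and the worst-case probability of missed detection with maximal permitted delay $m$ is $\mathbb{P}_{\mathrm{md}}(T,m)=\sup_{v\ge1}\mathbb{P}_v(T\ge v+m\mid T\ge v)$. *)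

theory Defs
  imports "HOL-Probability.Probability"
begin

text \<open>Log-likelihood ratio of the i-th observation (observations indexed from 1).\<close>
definition LLR :: "(real \<Rightarrow> real) \<Rightarrow> (real \<Rightarrow> real) \<Rightarrow> (nat \<Rightarrow> 'a \<Rightarrow> real) \<Rightarrow> nat \<Rightarrow> 'a \<Rightarrow> real" where
  "LLR f0 f1 X i \<omega> = ln (f1 (X i \<omega>) / f0 (X i \<omega>))"

definition Swin :: "(real \<Rightarrow> real) \<Rightarrow> (real \<Rightarrow> real) \<Rightarrow> (nat \<Rightarrow> 'a \<Rightarrow> real) \<Rightarrow> nat \<Rightarrow> nat \<Rightarrow> 'a \<Rightarrow> real" where
  "Swin f0 f1 X m n \<omega> = (\<Sum>i\<in>{n - m + 1..n}. LLR f0 f1 X i \<omega>)"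

definition T_FMA :: "(real \<Rightarrow> real) \<Rightarrow> (real \<Rightarrow> real) \<Rightarrow> (nat \<Rightarrow> 'a \<Rightarrow> real) \<Rightarrow> nat \<Rightarrow> real \<Rightarrow> 'a \<Rightarrow> enat" where
  "T_FMA f0 f1 X m h \<omega> =
     (if \<exists>n\<ge>m. Swin f0 f1 X m n \<omega> \<ge> h
      then enat (LEAST n. n \<ge> m \<and> Swin f0 f1 X m n \<omega> \<ge> h) else \<infinity>)"

text \<open>Elementary conditional probability P(A | B) = P(A \<inter> B) / P(B) (0 if P(B) = 0).\<close>
definition cprob :: "'a measure \<Rightarrow> 'a set \<Rightarrow> 'a set \<Rightarrow> real" where
  "cprob M A B = measure M (A \<inter> B) / measure M B"

definition P_fa :: "(enat \<Rightarrow> 'a measure) \<Rightarrow> ('a \<Rightarrow> enat) \<Rightarrow> nat \<Rightarrow> real" where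
  "P_fa P T ma = (SUP l\<in>{1..}. measure (P \<infinity>)
       {\<omega> \<in> space (P \<infinity>). enat l \<le> T \<omega> \<and> T \<omega> < enat (l + ma)})"

definition P_md :: "(enat \<Rightarrow> 'a measure) \<Rightarrow> ('a \<Rightarrow> enat) \<Rightarrow> nat \<Rightarrow> real" where
  "P_md P T m = (SUP v\<in>{1..}. cprob (P (enat v))
       {\<omega> \<in> space (P (enat v)). T \<omega> \<ge> enat (v + m)}
       {\<omega> \<in> space (P (enat v)). T \<omega> \<ge> enat v})"

definition is_pdf :: "(real \<Rightarrow> real) \<Rightarrow> bool" where
  "is_pdf f \<longleftrightarrow> f \<in> borel_measurable borel \<and> (\<forall>x. 0 \<le> f x) \<and>
     (\<integral>\<^sup>+ x. ennreal (f x) \<partial>lborel) = 1"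

end

theory Submission
  imports Defs
begin

text \<open>
  False alarm: every event S_n < h is a decreasing function of the i.i.d. pre-change
  log-likelihood ratios. By Harris's inequality (obtained from Chebyshev's integral inequality
  by induction on the number of coordinates) such events are positively correlated, so the
  probability that none of the at most m_alpha window sums ending in [l, l + m_alpha) reaches h
  is at least P_inf(S_m < h) ^ m_alpha.

  Missed detection: the event T >= v depends only on x_1, ..., x_(v-1), while T >= v + m forces
  S_(v+m-1) < h, an event of the independent post-change block x_v, ..., x_(v+m-1) whose law
  is the same for every v. Hence
  P_v(T >= v + m | T >= v) <= P_v(S_(v+m-1) < h) = P_1(S_m < h).
\<close>

section \<open>Chebyshev's and Harris's inequalities\<close>

lemma chebyshev_integral_antimono:
  fixes a b :: "real \<Rightarrow> real"
  assumes "prob_space \<mu>"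
    and [measurable]: "a \<in> borel_measurable \<mu>" "b \<in> borel_measurable \<mu>"
    and a_bounded: "\<And>x. \<bar>a x\<bar> \<le> 1" and b_bounded: "\<And>x. \<bar>b x\<bar> \<le> 1"
    and "antimono a" "antimono b"
  shows "(\<integral>x. a x \<partial>\<mu>) * (\<integral>x. b x \<partial>\<mu>) \<le> (\<integral>x. a x * b x \<partial>\<mu>)"
proof -
  interpret prob_space \<mu> by fact
  have [simp]: "integrable \<mu> a" "integrable \<mu> b" "integrable \<mu> (\<lambda>x. a x * b x)"
    using a_bounded b_bounded
    by (auto intro!: integrable_const_bound[where B=1] AE_I2 mult_le_one simp: abs_mult)
  define A where "A = (\<integral>x. a x \<partial>\<mu>)"
  define B where "B = (\<integral>x. b x \<partial>\<mu>)"
  define C where "C = (\<integral>x. a x * b x \<partial>\<mu>)"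
  have same_sign: "0 \<le> (a s - a t) * (b s - b t)" for s t
    using \<open>antimono a\<close> \<open>antimono b\<close>
    by (cases "s \<le> t") (auto simp: antimono_def intro: mult_nonneg_nonneg mult_nonpos_nonpos)
  have inner: "(\<integral>t. (a s - a t) * (b s - b t) \<partial>\<mu>) = a s * b s - a s * B - b s * A + C" for s
    by (simp add: algebra_simps A_def B_def C_def prob_space)
  have "0 \<le> (\<integral>s. (\<integral>t. (a s - a t) * (b s - b t) \<partial>\<mu>) \<partial>\<mu>)"
    by (intro Bochner_Integration.integral_nonneg same_sign)
  also have "\<dots> = 2 * C - 2 * A * B"
    by (simp add: inner algebra_simps A_def B_def C_def prob_space)
  finally show ?thesis by (simp add: A_def B_def C_def)
qed

lemma
  fixes \<mu> :: "real measure" and f :: "('i \<Rightarrow> real) \<Rightarrow> real"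
  assumes \<mu>: "prob_space \<mu>" and I: "finite I" "i \<notin> I"
    and f[measurable]: "f \<in> borel_measurable (PiM (insert i I) (\<lambda>_. \<mu>))"
    and f_bounded: "f \<in> space (PiM (insert i I) (\<lambda>_. \<mu>)) \<rightarrow> {-1..1}"
  shows integrable_section:
      "\<And>x. x \<in> space (PiM I (\<lambda>_. \<mu>)) \<Longrightarrow> integrable \<mu> (\<lambda>t. f (x(i := t)))"
    and borel_measurable_section_integral:
      "(\<lambda>x. \<integral>t. f (x(i := t)) \<partial>\<mu>) \<in> borel_measurable (PiM I (\<lambda>_. \<mu>))"
    and section_integral_bounded:
      "(\<lambda>x. \<integral>t. f (x(i := t)) \<partial>\<mu>) \<in> space (PiM I (\<lambda>_. \<mu>)) \<rightarrow> {-1..1}"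
    and integral_PiM_insert_section:
      "(\<integral>x. f x \<partial>PiM (insert i I) (\<lambda>_. \<mu>)) = (\<integral>x. (\<integral>t. f (x(i := t)) \<partial>\<mu>) \<partial>PiM I (\<lambda>_. \<mu>))"
proof -
  interpret \<mu>: prob_space \<mu> by fact
  interpret product_prob_space "\<lambda>_::'i. \<mu>" UNIV
    by unfold_locales
  have upd_space: "x(i := t) \<in> space (PiM (insert i I) (\<lambda>_. \<mu>))"
    if "x \<in> space (PiM I (\<lambda>_. \<mu>))" "t \<in> space \<mu>" for x t
    using that by (auto simp: space_PiM PiE_iff extensional_def)
  show integrable: "integrable \<mu> (\<lambda>t. f (x(i := t)))" if "x \<in> space (PiM I (\<lambda>_. \<mu>))" for x
    using that I(2) f_bounded upd_space
    by (intro \<mu>.integrable_const_bound[where B=1] AE_I2)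
       (auto simp: abs_le_iff intro: measurable_compose[OF measurable_component_update f])
  show "(\<lambda>x. \<integral>t. f (x(i := t)) \<partial>\<mu>) \<in> borel_measurable (PiM I (\<lambda>_. \<mu>))"
    by (rule \<mu>.borel_measurable_lebesgue_integral)
       (use measurable_compose[OF measurable_add_dim f] in \<open>simp add: case_prod_beta'\<close>)
  show "(\<lambda>x. \<integral>t. f (x(i := t)) \<partial>\<mu>) \<in> space (PiM I (\<lambda>_. \<mu>)) \<rightarrow> {-1..1}"
  proof
    fix x assume "x \<in> space (PiM I (\<lambda>_. \<mu>))"
    then have "\<bar>\<integral>t. f (x(i := t)) \<partial>\<mu>\<bar> \<le> (\<integral>t. 1 \<partial>\<mu>)"
      using f_bounded upd_space by (intro integral_abs_bound_integral integrable) (auto simp: abs_le_iff)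
    then show "(\<integral>t. f (x(i := t)) \<partial>\<mu>) \<in> {-1..1}" by (simp add: \<mu>.prob_space abs_le_iff)
  qed
  show "(\<integral>x. f x \<partial>PiM (insert i I) (\<lambda>_. \<mu>)) = (\<integral>x. (\<integral>t. f (x(i := t)) \<partial>\<mu>) \<partial>PiM I (\<lambda>_. \<mu>))"
  proof (rule product_integral_insert[OF I])
    interpret Q: prob_space "PiM (insert i I) (\<lambda>_. \<mu>)"
      by (intro prob_space_PiM \<mu>)
    show "integrable (PiM (insert i I) (\<lambda>_. \<mu>)) f"
      using f_bounded by (intro Q.integrable_const_bound[where B=1] AE_I2) (auto simp: abs_le_iff)
  qed
qed

lemma mult_mem_symmetric_unit_interval:
  fixes a b :: real
  assumes "a \<in> {-1..1}" "b \<in> {-1..1}"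
  shows "a * b \<in> {-1..1}"
proof -
  have "\<bar>a\<bar> * \<bar>b\<bar> \<le> 1" using assms by (intro mult_le_one) auto
  then have "\<bar>a * b\<bar> \<le> 1" by (simp add: abs_mult)
  then show ?thesis by (auto simp: abs_le_iff)
qed

definition antimono_coords :: "'i set \<Rightarrow> (('i \<Rightarrow> real) \<Rightarrow> real) \<Rightarrow> bool" where
  "antimono_coords I f \<longleftrightarrow>
     (\<forall>x\<in>PiE I (\<lambda>_. UNIV). \<forall>y\<in>PiE I (\<lambda>_. UNIV). (\<forall>j\<in>I. x j \<le> y j) \<longrightarrow> f y \<le> f x)"

lemma antimono_coords_fun_upd:
  assumes "antimono_coords (insert i I) f" "i \<notin> I"
    and "x \<in> PiE I (\<lambda>_. UNIV)" "y \<in> PiE I (\<lambda>_. UNIV)" "\<forall>j\<in>I. x j \<le> y j" "s \<le> t"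
  shows "f (y(i := t)) \<le> f (x(i := s))"
  using assms unfolding antimono_coords_def
  by (elim ballE[of _ _ "x(i := s)"] ballE[of _ _ "y(i := t)"] impE)
     (auto simp: PiE_iff extensional_def)

lemma antimono_coords_section_integral:
  fixes \<mu> :: "real measure"
  assumes \<mu>: "prob_space \<mu>" "sets \<mu> = sets borel" and I: "finite I" "i \<notin> I"
    and f: "f \<in> borel_measurable (PiM (insert i I) (\<lambda>_. \<mu>))"
      "f \<in> space (PiM (insert i I) (\<lambda>_. \<mu>)) \<rightarrow> {-1..1}" "antimono_coords (insert i I) f"
  shows "antimono_coords I (\<lambda>x. \<integral>t. f (x(i := t)) \<partial>\<mu>)"
proof -
  have "space (PiM I (\<lambda>_. \<mu>)) = PiE I (\<lambda>_. UNIV)"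
    using sets_eq_imp_space_eq[OF \<mu>(2)] by (simp add: space_PiM)
  then show ?thesis
    unfolding antimono_coords_def
    by (auto intro!: integral_mono integrable_section[OF \<mu>(1) I f(1,2)]
        simp: antimono_coords_fun_upd[OF f(3) I(2)])
qed

lemma chebyshev_section_integral:
  fixes \<mu> :: "real measure"
  assumes \<mu>: "prob_space \<mu>" "sets \<mu> = sets borel" and I: "finite I" "i \<notin> I"
    and f: "f \<in> borel_measurable (PiM (insert i I) (\<lambda>_. \<mu>))"
      "f \<in> space (PiM (insert i I) (\<lambda>_. \<mu>)) \<rightarrow> {-1..1}" "antimono_coords (insert i I) f"
    and g: "g \<in> borel_measurable (PiM (insert i I) (\<lambda>_. \<mu>))"
      "g \<in> space (PiM (insert i I) (\<lambda>_. \<mu>)) \<rightarrow> {-1..1}" "antimono_coords (insert i I) g"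
    and x: "x \<in> space (PiM I (\<lambda>_. \<mu>))"
  shows "(\<integral>t. f (x(i := t)) \<partial>\<mu>) * (\<integral>t. g (x(i := t)) \<partial>\<mu>) \<le> (\<integral>t. f (x(i := t)) * g (x(i := t)) \<partial>\<mu>)"
proof (rule chebyshev_integral_antimono[OF \<mu>(1)])
  have space_\<mu>: "space \<mu> = UNIV"
    using sets_eq_imp_space_eq[OF \<mu>(2)] by simp
  show "(\<lambda>t. f (x(i := t))) \<in> borel_measurable \<mu>" "(\<lambda>t. g (x(i := t))) \<in> borel_measurable \<mu>"
    by (intro borel_measurable_integrable integrable_section[OF \<mu>(1) I f(1,2)]
        integrable_section[OF \<mu>(1) I g(1,2)] x)+
  have "x(i := t) \<in> space (PiM (insert i I) (\<lambda>_. \<mu>))" for t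
    using x by (auto simp: space_PiM space_\<mu> PiE_iff extensional_def)
  then show "\<bar>f (x(i := t))\<bar> \<le> 1" "\<bar>g (x(i := t))\<bar> \<le> 1" for t
    using f(2) g(2) by (auto simp: abs_le_iff)
  show "antimono (\<lambda>t. f (x(i := t)))" "antimono (\<lambda>t. g (x(i := t)))"
    using x by (auto intro!: antimonoI simp: space_PiM space_\<mu>
        antimono_coords_fun_upd[OF f(3) I(2)] antimono_coords_fun_upd[OF g(3) I(2)])
qed

theorem harris_inequality:
  fixes \<mu> :: "real measure" and I :: "'i set"
  assumes \<mu>: "prob_space \<mu>" "sets \<mu> = sets borel" and "finite I"
    and "f \<in> borel_measurable (PiM I (\<lambda>_. \<mu>))" "g \<in> borel_measurable (PiM I (\<lambda>_. \<mu>))"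
    and "f \<in> space (PiM I (\<lambda>_. \<mu>)) \<rightarrow> {-1..1}" "g \<in> space (PiM I (\<lambda>_. \<mu>)) \<rightarrow> {-1..1}"
    and "antimono_coords I f" "antimono_coords I g"
  shows "(\<integral>x. f x \<partial>PiM I (\<lambda>_. \<mu>)) * (\<integral>x. g x \<partial>PiM I (\<lambda>_. \<mu>)) \<le> (\<integral>x. f x * g x \<partial>PiM I (\<lambda>_. \<mu>))"
  using assms(3-)
proof (induction I arbitrary: f g rule: finite_induct)
  case empty
  then show ?case by (simp add: PiM_empty lebesgue_integral_count_space_finite)
next
  case (insert i I f g)
  let ?R = "PiM I (\<lambda>_. \<mu>)"
  interpret R: prob_space ?R by (intro prob_space_PiM \<mu>)
  have fg_measurable: "(\<lambda>x. f x * g x) \<in> borel_measurable (PiM (insert i I) (\<lambda>_. \<mu>))"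
    using insert.prems(1,2) by measurable
  have fg_bounded: "(\<lambda>x. f x * g x) \<in> space (PiM (insert i I) (\<lambda>_. \<mu>)) \<rightarrow> {-1..1}"
    using insert.prems(3,4) by (auto intro: mult_mem_symmetric_unit_interval)
  define F where "F x = (\<integral>t. f (x(i := t)) \<partial>\<mu>)" for x
  define G where "G x = (\<integral>t. g (x(i := t)) \<partial>\<mu>)" for x
  define H where "H x = (\<integral>t. f (x(i := t)) * g (x(i := t)) \<partial>\<mu>)" for x
  note f_sec = borel_measurable_section_integral[OF \<mu>(1) insert.hyps insert.prems(1,3), folded F_def]
    section_integral_bounded[OF \<mu>(1) insert.hyps insert.prems(1,3), folded F_def]
    integral_PiM_insert_section[OF \<mu>(1) insert.hyps insert.prems(1,3), folded F_def]
    antimono_coords_section_integral[OF \<mu> insert.hyps insert.prems(1,3,5), folded F_def]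
  note g_sec = borel_measurable_section_integral[OF \<mu>(1) insert.hyps insert.prems(2,4), folded G_def]
    section_integral_bounded[OF \<mu>(1) insert.hyps insert.prems(2,4), folded G_def]
    integral_PiM_insert_section[OF \<mu>(1) insert.hyps insert.prems(2,4), folded G_def]
    antimono_coords_section_integral[OF \<mu> insert.hyps insert.prems(2,4,6), folded G_def]
  note fg_sec =
    borel_measurable_section_integral[OF \<mu>(1) insert.hyps fg_measurable fg_bounded, folded H_def]
    section_integral_bounded[OF \<mu>(1) insert.hyps fg_measurable fg_bounded, folded H_def]
    integral_PiM_insert_section[OF \<mu>(1) insert.hyps fg_measurable fg_bounded, folded H_def]
  have FG_bounded: "\<bar>F x * G x\<bar> \<le> 1" if "x \<in> space ?R" for x
    using mult_mem_symmetric_unit_interval[OF funcset_mem[OF f_sec(2) that] funcset_mem[OF g_sec(2) that]]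
    by (auto simp: abs_le_iff)
  have "(\<integral>x. F x \<partial>?R) * (\<integral>x. G x \<partial>?R) \<le> (\<integral>x. F x * G x \<partial>?R)"
    using f_sec g_sec by (intro insert.IH) auto
  also have "\<dots> \<le> (\<integral>x. H x \<partial>?R)"
    using FG_bounded f_sec(1) g_sec(1) fg_sec(1,2) unfolding F_def G_def H_def
    by (intro integral_mono R.integrable_const_bound[where B=1] AE_I2
        chebyshev_section_integral[OF \<mu> insert.hyps insert.prems(1,3,5,2,4,6)])
       (auto simp: abs_le_iff)
  finally show ?case
    using f_sec(3) g_sec(3) fg_sec(3) by (simp add: F_def G_def H_def)
qed

lemma antimono_coords_indicator_iff:
  "antimono_coords I (indicator A) \<longleftrightarrow>
     (\<forall>x\<in>PiE I (\<lambda>_. UNIV). \<forall>y\<in>PiE I (\<lambda>_. UNIV). (\<forall>j\<in>I. x j \<le> y j) \<longrightarrow> y \<in> A \<longrightarrow> x \<in> A)"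
  unfolding antimono_coords_def by (auto simp: indicator_def)

lemma harris_inequality_events:
  fixes \<nu> :: "real measure" and A :: "'k \<Rightarrow> ('i \<Rightarrow> real) set"
  assumes \<nu>: "prob_space \<nu>" "sets \<nu> = sets borel" and W: "finite W" and "finite K"
    and "\<And>k. k \<in> K \<Longrightarrow> A k \<in> sets (PiM W (\<lambda>_. \<nu>))"
    and "\<And>k. k \<in> K \<Longrightarrow> antimono_coords W (indicator (A k))"
  shows "(\<Prod>k\<in>K. measure (PiM W (\<lambda>_. \<nu>)) (A k))
      \<le> measure (PiM W (\<lambda>_. \<nu>)) (space (PiM W (\<lambda>_. \<nu>)) \<inter> (\<Inter>k\<in>K. A k))"
  using assms(4-)
proof (induction K rule: finite_induct)
  case empty
  interpret prob_space "PiM W (\<lambda>_. \<nu>)" by (intro prob_space_PiM \<nu>)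
  show ?case by (simp add: prob_space)
next
  case (insert k K)
  let ?Q = "PiM W (\<lambda>_. \<nu>)"
  interpret Q: prob_space ?Q by (intro prob_space_PiM \<nu>)
  define B where "B = space ?Q \<inter> (\<Inter>k\<in>K. A k)"
  have A: "A k \<in> sets ?Q" "antimono_coords W (indicator (A k))" using insert.prems by auto
  have B: "B \<in> sets ?Q" unfolding B_def using insert.prems insert.hyps(1) by auto
  have "space ?Q = PiE W (\<lambda>_. UNIV)"
    using sets_eq_imp_space_eq[OF \<nu>(2)] by (simp add: space_PiM)
  then have "antimono_coords W (indicator B)"
    unfolding antimono_coords_indicator_iff B_def
  proof (intro ballI impI IntI INT_I)
    fix x y assume xy: "x \<in> PiE W (\<lambda>_. UNIV)" "y \<in> PiE W (\<lambda>_. UNIV)" "\<forall>j\<in>W. x j \<le> y j"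
      and "y \<in> space ?Q \<inter> (\<Inter>k\<in>K. A k)"
    then show "x \<in> space ?Q" using \<open>space ?Q = PiE W (\<lambda>_. UNIV)\<close> by simp
    show "x \<in> A j" if "j \<in> K" for j
      using insert.prems(2)[of j] that xy \<open>y \<in> space ?Q \<inter> (\<Inter>k\<in>K. A k)\<close>
      unfolding antimono_coords_indicator_iff by auto
  qed
  have indicator_bounded: "indicator S \<in> space ?Q \<rightarrow> {-1..1::real}" for S
    by (auto simp: indicator_def)
  have "(\<Prod>k\<in>insert k K. measure ?Q (A k)) \<le> measure ?Q (A k) * measure ?Q B"
    using insert by (auto simp: B_def intro!: mult_left_mono)
  also have "\<dots> = (\<integral>x. indicator (A k) x \<partial>?Q) * (\<integral>x. indicator B x \<partial>?Q)"
    using A B by simp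
  also have "\<dots> \<le> (\<integral>x. indicator (A k) x * indicator B x \<partial>?Q)"
    using A B \<open>antimono_coords W (indicator B)\<close> indicator_bounded
    by (intro harris_inequality \<nu> W) auto
  also have "\<dots> = measure ?Q (space ?Q \<inter> (\<Inter>k\<in>insert k K. A k))"
    using A B by (simp add: indicator_inter_arith[symmetric] B_def Int_left_commute)
  finally show ?case .
qed

section \<open>Window sums of independent sequences\<close>

lemma (in prob_space) distr_restrict_indep_vars:
  assumes "indep_vars (\<lambda>_. borel) Y J" "W \<noteq> {}" "W \<subseteq> J"
    and "\<And>i. i \<in> W \<Longrightarrow> distr M borel (Y i) = \<nu>"
  shows "distr M (PiM W (\<lambda>_. borel)) (\<lambda>\<omega>. \<lambda>i\<in>W. Y i \<omega>) = PiM W (\<lambda>_. \<nu>)"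
proof -
  have indep: "indep_vars (\<lambda>_. borel) Y W" by (rule indep_vars_subset[OF assms(1,3)])
  then have "random_variable borel (Y i)" if "i \<in> W" for i
    using that by (auto simp: indep_vars_def)
  then have "distr M (PiM W (\<lambda>_. borel)) (\<lambda>\<omega>. \<lambda>i\<in>W. Y i \<omega>) = PiM W (\<lambda>i. distr M borel (Y i))"
    using indep_vars_iff_distr_eq_PiM'[where I=W and M'="\<lambda>_. borel" and X=Y] indep assms(2) by simp
  also have "\<dots> = PiM W (\<lambda>_. \<nu>)" by (rule PiM_cong) (auto simp: assms(4))
  finally show ?thesis .
qed

lemma (in prob_space) measurable_restrict_indep_vars:
  assumes "indep_vars M' Y J" "L \<subseteq> J"
  shows "(\<lambda>\<omega>. \<lambda>i\<in>L. Y i \<omega>) \<in> measurable M (PiM L M')"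
  using assms by (auto simp: indep_vars_def intro!: measurable_restrict)

lemma (in prob_space) prob_Int_restrict_indep_vars:
  assumes "indep_vars M' Y J" "L1 \<inter> L2 = {}" "L1 \<subseteq> J" "L2 \<subseteq> J"
    and "S1 \<in> sets (PiM L1 M')" "S2 \<in> sets (PiM L2 M')"
  shows "prob ((\<lambda>\<omega>. \<lambda>i\<in>L1. Y i \<omega>) -` S1 \<inter> (\<lambda>\<omega>. \<lambda>i\<in>L2. Y i \<omega>) -` S2 \<inter> space M)
    = prob ((\<lambda>\<omega>. \<lambda>i\<in>L1. Y i \<omega>) -` S1 \<inter> space M) * prob ((\<lambda>\<omega>. \<lambda>i\<in>L2. Y i \<omega>) -` S2 \<inter> space M)"
proof -
  have "(\<lambda>\<omega>. (\<lambda>i\<in>L1. Y i \<omega>, \<lambda>i\<in>L2. Y i \<omega>)) -` (S1 \<times> S2) \<inter> space M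
      = (\<lambda>\<omega>. \<lambda>i\<in>L1. Y i \<omega>) -` S1 \<inter> (\<lambda>\<omega>. \<lambda>i\<in>L2. Y i \<omega>) -` S2 \<inter> space M"
    by auto
  then show ?thesis
    using indep_varD[OF indep_var_restrict[OF assms(1-4)] assms(5,6)] by simp
qed

lemma (in prob_space) prob_restrict_indep_vars:
  assumes "indep_vars (\<lambda>_. borel) Y J" "W \<noteq> {}" "W \<subseteq> J"
    and law: "\<And>i. i \<in> W \<Longrightarrow> distr M borel (Y i) = \<nu>"
    and Q: "{y\<in>space (PiM W (\<lambda>_. borel)). Q y} \<in> sets (PiM W (\<lambda>_. borel))"
  shows "prob {\<omega>\<in>space M. Q (\<lambda>i\<in>W. Y i \<omega>)} = measure (PiM W (\<lambda>_. \<nu>)) {y\<in>space (PiM W (\<lambda>_. \<nu>)). Q y}"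
proof -
  let ?V = "\<lambda>\<omega>. \<lambda>i\<in>W. Y i \<omega>"
  have V: "?V \<in> measurable M (PiM W (\<lambda>_. borel))"
    by (rule measurable_restrict_indep_vars[OF assms(1,3)])
  have preimage: "{\<omega>\<in>space M. Q (?V \<omega>)} = ?V -` {y\<in>space (PiM W (\<lambda>_. borel)). Q y} \<inter> space M"
    by (auto simp: space_PiM)
  obtain i where "i \<in> W" using assms(2) by blast
  then have "sets \<nu> = sets borel" using law[of i] by auto
  then have "space (PiM W (\<lambda>_. \<nu>)) = space (PiM W (\<lambda>_. borel))"
    by (simp add: space_PiM sets_eq_imp_space_eq)
  moreover have "prob {\<omega>\<in>space M. Q (?V \<omega>)}
      = measure (distr M (PiM W (\<lambda>_. borel)) ?V) {y\<in>space (PiM W (\<lambda>_. borel)). Q y}"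
    unfolding preimage by (rule measure_distr[symmetric, OF V Q])
  ultimately show "prob {\<omega>\<in>space M. Q (?V \<omega>)} = measure (PiM W (\<lambda>_. \<nu>)) {y\<in>space (PiM W (\<lambda>_. \<nu>)). Q y}"
    by (simp add: distr_restrict_indep_vars[OF assms(1-4)])
qed

definition window_sum :: "(nat \<Rightarrow> 'a \<Rightarrow> real) \<Rightarrow> nat \<Rightarrow> nat \<Rightarrow> 'a \<Rightarrow> real" where
  "window_sum Y m n \<omega> = (\<Sum>i\<in>{n - m + 1..n}. Y i \<omega>)"

lemma borel_measurable_window_sum:
  assumes "1 \<le> m" "\<And>i. 1 \<le> i \<Longrightarrow> Y i \<in> borel_measurable M"
  shows "window_sum Y m n \<in> borel_measurable M"
  unfolding window_sum_def using assms by (intro borel_measurable_sum) auto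

lemma sets_PiM_sum_less:
  assumes "sets \<nu> = sets borel" "w \<subseteq> W"
  shows "{y\<in>space (PiM W (\<lambda>_. \<nu>)). (\<Sum>i\<in>w. y i) < (h::real)} \<in> sets (PiM W (\<lambda>_. \<nu>))"
proof -
  have "(\<lambda>y. y i) \<in> borel_measurable (PiM W (\<lambda>_. \<nu>))" if "i \<in> w" for i
    using measurable_cong_sets[OF refl assms(1)] that assms(2) by (auto intro: measurable_component_singleton)
  then have "(\<lambda>y. \<Sum>i\<in>w. y i) \<in> borel_measurable (PiM W (\<lambda>_. \<nu>))"
    by (intro borel_measurable_sum)
  then show ?thesis by measurable
qed

lemma (in prob_space) prob_window_sum_less:
  assumes indep: "indep_vars (\<lambda>_. borel) Y J" and window: "{n - m + 1..n} \<subseteq> J" "1 \<le> m" "m \<le> n"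
    and law: "\<And>i. i \<in> {n - m + 1..n} \<Longrightarrow> distr M borel (Y i) = \<nu>"
  shows "prob {\<omega>\<in>space M. window_sum Y m n \<omega> < h}
    = measure (PiM {1..m} (\<lambda>_. \<nu>)) {y\<in>space (PiM {1..m} (\<lambda>_. \<nu>)). (\<Sum>i\<in>{1..m}. y i) < h}"
proof -
  let ?W = "{n - m + 1..n}" and ?a = "n - m"
  have "n \<in> ?W" "distr M borel (Y n) = \<nu>" using window law[of n] by auto
  moreover have "random_variable borel (Y n)"
    using indep window \<open>n \<in> ?W\<close> by (auto simp: indep_vars_def)
  ultimately have \<nu>: "prob_space \<nu>" "sets \<nu> = sets borel"
    by (auto intro: prob_space_distr)
  have "prob {\<omega>\<in>space M. window_sum Y m n \<omega> < h}
      = measure (PiM ?W (\<lambda>_. \<nu>)) {y\<in>space (PiM ?W (\<lambda>_. \<nu>)). (\<Sum>i\<in>?W. y i) < h}"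
    using prob_restrict_indep_vars[OF indep _ window(1) law, of "\<lambda>y. (\<Sum>i\<in>?W. y i) < h"]
      sets_PiM_sum_less[of borel] window by (simp add: window_sum_def)
  also have "\<dots> = measure (PiM {1..m} (\<lambda>_. \<nu>)) {y\<in>space (PiM {1..m} (\<lambda>_. \<nu>)). (\<Sum>i\<in>{1..m}. y i) < h}"
  proof -
    \<comment> \<open>shift the window {n-m+1..n} onto {1..m}\<close>
    let ?S = "\<lambda>y. \<lambda>j\<in>{1..m}. y (j + ?a)"
    have S: "?S \<in> measurable (PiM ?W (\<lambda>_. \<nu>)) (PiM {1..m} (\<lambda>_. \<nu>))"
      using window by (intro measurable_restrict measurable_component_singleton) auto
    have "distr (PiM ?W (\<lambda>_. \<nu>)) (PiM {1..m} (\<lambda>_. \<nu>)) ?S = PiM {1..m} (\<lambda>_. \<nu>)"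
    proof (rule distr_PiM_reindex)
      show "inj_on (\<lambda>j. j + ?a) {1..m}" by (simp add: inj_on_def)
      show "(\<lambda>j. j + ?a) \<in> {1..m} \<rightarrow> ?W" using window by auto
    qed (rule \<nu>(1))
    moreover have "?S -` {y\<in>space (PiM {1..m} (\<lambda>_. \<nu>)). (\<Sum>i\<in>{1..m}. y i) < h} \<inter> space (PiM ?W (\<lambda>_. \<nu>))
        = {y\<in>space (PiM ?W (\<lambda>_. \<nu>)). (\<Sum>i\<in>?W. y i) < h}"
    proof -
      have "(\<Sum>j\<in>{1..m}. y (j + ?a)) = (\<Sum>i\<in>?W. y i)" for y :: "nat \<Rightarrow> real"
        using sum.shift_bounds_cl_nat_ivl[of y 1 ?a m] window by (simp add: add.commute)
      then show ?thesis using window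
        by (auto simp: space_PiM PiE_iff extensional_def sets_eq_imp_space_eq[OF \<nu>(2)])
    qed
    ultimately show ?thesis
      using measure_distr[OF S sets_PiM_sum_less[OF \<nu>(2) order_refl]] by simp
  qed
  finally show ?thesis .
qed

lemma antimono_coords_indicator_sum_less:
  assumes "sets \<nu> = sets borel" "w \<subseteq> W"
  shows "antimono_coords W (indicator {y\<in>space (PiM W (\<lambda>_. \<nu>)). (\<Sum>i\<in>w. y i) < (h::real)})"
  unfolding antimono_coords_indicator_iff
proof (intro ballI impI CollectI conjI)
  fix x y assume x: "x \<in> PiE W (\<lambda>_. UNIV)" and "y \<in> PiE W (\<lambda>_. UNIV)"
    and xy: "\<forall>j\<in>W. x j \<le> y j" and y: "y \<in> {y\<in>space (PiM W (\<lambda>_. \<nu>)). (\<Sum>i\<in>w. y i) < h}"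
  show "x \<in> space (PiM W (\<lambda>_. \<nu>))"
    using x sets_eq_imp_space_eq[OF assms(1)] by (simp add: space_PiM)
  have "(\<Sum>i\<in>w. x i) \<le> (\<Sum>i\<in>w. y i)"
    using xy assms(2) by (intro sum_mono) auto
  then show "(\<Sum>i\<in>w. x i) < h" using y by simp
qed

lemma (in prob_space) prob_window_sums_less_eq_PiM:
  assumes indep: "indep_vars (\<lambda>_. borel) Y {1..}" and law: "\<And>i. 1 \<le> i \<Longrightarrow> distr M borel (Y i) = \<nu>"
    and m: "1 \<le> m" "m \<le> k" and K: "K \<subseteq> {m..k}"
  shows "prob {\<omega>\<in>space M. \<forall>n\<in>K. window_sum Y m n \<omega> < h}
    = measure (PiM {1..k} (\<lambda>_. \<nu>)) {y\<in>space (PiM {1..k} (\<lambda>_. \<nu>)). \<forall>n\<in>K. (\<Sum>i\<in>{n - m + 1..n}. y i) < h}"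
proof -
  have window: "{n - m + 1..n} \<subseteq> {1..k}" if "n \<in> K" for n
    using that K by auto
  have "{y\<in>space (PiM {1..k} (\<lambda>_. borel)). \<forall>n\<in>K. (\<Sum>i\<in>{n - m + 1..n}. y i) < h}
      \<in> sets (PiM {1..k} (\<lambda>_. borel))"
    using window finite_subset[OF K]
    by (intro sets.sets_Collect_finite_All sets_PiM_sum_less) auto
  from prob_restrict_indep_vars[OF indep _ _ law this]
  have "prob {\<omega>\<in>space M. \<forall>n\<in>K. (\<Sum>i\<in>{n - m + 1..n}. (\<lambda>i\<in>{1..k}. Y i \<omega>) i) < h}
      = measure (PiM {1..k} (\<lambda>_. \<nu>)) {y\<in>space (PiM {1..k} (\<lambda>_. \<nu>)). \<forall>n\<in>K. (\<Sum>i\<in>{n - m + 1..n}. y i) < h}"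
    using m by auto
  moreover have "(\<Sum>i\<in>{n - m + 1..n}. (\<lambda>i\<in>{1..k}. Y i \<omega>) i) = window_sum Y m n \<omega>" if "n \<in> K" for n \<omega>
    using window[OF that] unfolding window_sum_def by (intro sum.cong) auto
  ultimately show ?thesis
    by (auto intro!: arg_cong[where f=prob] simp flip: \<open>prob _ = _\<close>)
qed

lemma (in prob_space) prob_window_sums_less_ge_power:
  assumes indep: "indep_vars (\<lambda>_. borel) Y {1..}" and law: "\<And>i. 1 \<le> i \<Longrightarrow> distr M borel (Y i) = \<nu>"
    and m: "1 \<le> m" and N: "finite N" "N \<subseteq> {m..}"
  shows "prob {\<omega>\<in>space M. window_sum Y m m \<omega> < h} ^ card N
    \<le> prob {\<omega>\<in>space M. \<forall>n\<in>N. window_sum Y m n \<omega> < h}"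
proof -
  define k where "k = Max (insert m N)"
  define Q where "Q = PiM {1..k} (\<lambda>_. \<nu>)"
  define A where "A n = {y\<in>space Q. (\<Sum>i\<in>{n - m + 1..n}. y i) < h}" for n
  have \<nu>: "prob_space \<nu>" "sets \<nu> = sets borel"
    using law[of 1] indep by (auto simp: indep_vars_def intro!: prob_space_distr)
  have k: "m \<le> k" "N \<subseteq> {m..k}"
    using N by (auto simp: k_def)
  have same_prob: "prob {\<omega>\<in>space M. window_sum Y m n \<omega> < h} = prob {\<omega>\<in>space M. window_sum Y m m \<omega> < h}"
    if "n \<in> N" for n
    using that N m law by (subst (1 2) prob_window_sum_less[OF indep]) auto
  have prob_window: "prob {\<omega>\<in>space M. window_sum Y m n \<omega> < h} = measure Q (A n)" if "n \<in> N" for n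
    using prob_window_sums_less_eq_PiM[OF indep law m k(1), of "{n}"] that k(2)
    by (auto simp: A_def Q_def)
  have "prob {\<omega>\<in>space M. window_sum Y m m \<omega> < h} ^ card N
      = (\<Prod>n\<in>N. prob {\<omega>\<in>space M. window_sum Y m n \<omega> < h})"
    using prod.cong[OF refl same_prob, of N] by simp
  also have "\<dots> = (\<Prod>n\<in>N. measure Q (A n))"
    by (rule prod.cong[OF refl prob_window])
  also have "\<dots> \<le> measure Q (space Q \<inter> (\<Inter>n\<in>N. A n))"
    unfolding Q_def A_def using k(2)
    by (intro harris_inequality_events \<nu> N(1) finite_atLeastAtMost sets_PiM_sum_less
        antimono_coords_indicator_sum_less) auto
  also have "\<dots> = measure Q {y\<in>space Q. \<forall>n\<in>N. (\<Sum>i\<in>{n - m + 1..n}. y i) < h}"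
    by (rule arg_cong[where f="measure Q"]) (auto simp: A_def)
  also have "\<dots> = prob {\<omega>\<in>space M. \<forall>n\<in>N. window_sum Y m n \<omega> < h}"
    using prob_window_sums_less_eq_PiM[OF indep law m k] by (simp add: Q_def)
  finally show ?thesis .
qed

lemma (in prob_space) cprob_le_prob_of_indep:
  assumes "A \<subseteq> B \<inter> C" "B \<in> events" "C \<in> events" "prob (B \<inter> C) = prob B * prob C"
  shows "cprob M A C \<le> prob B"
proof -
  have "cprob M A C = prob A / prob C"
    using assms(1) by (simp add: cprob_def Int_absorb2)
  also have "\<dots> \<le> prob (B \<inter> C) / prob C"
    using assms(1-3) by (intro divide_right_mono finite_measure_mono) auto
  also have "\<dots> \<le> prob B"
    by (cases "prob C = 0") (simp_all add: assms(4))
  finally show ?thesis .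
qed

lemma (in prob_space) cprob_window_sums_less_le:
  assumes indep: "indep_vars (\<lambda>_. borel) Y {1..}" and m: "1 \<le> m" and v: "1 \<le> v"
  shows "cprob M {\<omega>\<in>space M. \<forall>n. m \<le> n \<and> n < v + m \<longrightarrow> window_sum Y m n \<omega> < h}
                 {\<omega>\<in>space M. \<forall>n. m \<le> n \<and> n < v \<longrightarrow> window_sum Y m n \<omega> < h}
       \<le> prob {\<omega>\<in>space M. window_sum Y m (v + m - 1) \<omega> < h}"
proof (rule cprob_le_prob_of_indep)
  define L1 where "L1 = {1..<v}"
  define L2 where "L2 = {v..v + m - 1}"
  let ?V1 = "\<lambda>\<omega>. \<lambda>i\<in>L1. Y i \<omega>" and ?V2 = "\<lambda>\<omega>. \<lambda>i\<in>L2. Y i \<omega>"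
  define S1 where "S1 = {y\<in>space (PiM L1 (\<lambda>_. borel)). \<forall>n\<in>{m..<v}. (\<Sum>i\<in>{n - m + 1..n}. y i) < h}"
  define S2 where "S2 = {y\<in>space (PiM L2 (\<lambda>_. borel)). (\<Sum>i\<in>L2. y i) < h}"
  let ?B = "{\<omega>\<in>space M. window_sum Y m (v + m - 1) \<omega> < h}"
  let ?C = "{\<omega>\<in>space M. \<forall>n. m \<le> n \<and> n < v \<longrightarrow> window_sum Y m n \<omega> < h}"
  \<comment> \<open>the conditioning event only sees Y on L1, the window ending at v + m - 1 is exactly L2\<close>
  have window_L1: "{n - m + 1..n} \<subseteq> L1" if "n \<in> {m..<v}" for n
    using that m by (auto simp: L1_def)
  have C_eq: "?V1 -` S1 \<inter> space M = ?C"
  proof -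
    have "(\<Sum>i\<in>{n - m + 1..n}. ?V1 \<omega> i) = window_sum Y m n \<omega>" if "n \<in> {m..<v}" for n \<omega>
      using window_L1[OF that] unfolding window_sum_def by (intro sum.cong) auto
    then show ?thesis by (auto simp: S1_def space_PiM)
  qed
  have B_eq: "?V2 -` S2 \<inter> space M = ?B"
  proof -
    have "{v + m - 1 - m + 1..v + m - 1} = L2" using v m by (auto simp: L2_def)
    then show ?thesis by (auto simp: S2_def window_sum_def space_PiM intro!: sum.cong)
  qed
  have L: "L1 \<inter> L2 = {}" "L1 \<subseteq> {1..}" "L2 \<subseteq> {1..}"
    using v by (auto simp: L1_def L2_def)
  have S: "S1 \<in> sets (PiM L1 (\<lambda>_. borel))" "S2 \<in> sets (PiM L2 (\<lambda>_. borel))"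
    unfolding S1_def S2_def
    by (intro sets.sets_Collect_finite_All sets_PiM_sum_less window_L1 finite_atLeastLessThan order_refl) auto
  show "?B \<in> events"
    unfolding B_eq[symmetric] by (rule measurable_sets[OF measurable_restrict_indep_vars[OF indep L(3)] S(2)])
  show "?C \<in> events"
    unfolding C_eq[symmetric] by (rule measurable_sets[OF measurable_restrict_indep_vars[OF indep L(2)] S(1)])
  show "prob (?B \<inter> ?C) = prob ?B * prob ?C"
    using prob_Int_restrict_indep_vars[OF indep L S] unfolding B_eq[symmetric] C_eq[symmetric]
    by (simp add: Int_commute Int_left_commute mult.commute)
  show "{\<omega>\<in>space M. \<forall>n. m \<le> n \<and> n < v + m \<longrightarrow> window_sum Y m n \<omega> < h} \<subseteq> ?B \<inter> ?C"
    using v m by auto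
qed

section \<open>The finite moving average stopping time\<close>

lemma Swin_eq_window_sum: "Swin f0 f1 X = window_sum (LLR f0 f1 X)"
  by (simp add: fun_eq_iff Swin_def window_sum_def)

lemma enat_le_T_FMA_iff:
  "enat k \<le> T_FMA f0 f1 X m h \<omega> \<longleftrightarrow> (\<forall>n. m \<le> n \<and> n < k \<longrightarrow> Swin f0 f1 X m n \<omega> < h)"
proof (cases "\<exists>n\<ge>m. h \<le> Swin f0 f1 X m n \<omega>")
  case True
  let ?L = "LEAST n. m \<le> n \<and> h \<le> Swin f0 f1 X m n \<omega>"
  have "m \<le> ?L" "h \<le> Swin f0 f1 X m ?L \<omega>"
    using LeastI_ex[OF True[unfolded Bex_def[symmetric]]] by auto
  moreover have "?L \<le> n" if "m \<le> n" "h \<le> Swin f0 f1 X m n \<omega>" for n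
    using that by (intro Least_le) auto
  ultimately show ?thesis
    unfolding T_FMA_def if_P[OF True] by (auto simp: not_less) (meson leD le_trans not_le)
next
  case False
  then show ?thesis unfolding T_FMA_def if_not_P[OF False] by (simp add: not_le) (meson not_less)
qed

lemma T_FMA_less_enat_iff:
  "T_FMA f0 f1 X m h \<omega> < enat k \<longleftrightarrow> (\<exists>n. m \<le> n \<and> n < k \<and> h \<le> Swin f0 f1 X m n \<omega>)"
  using enat_le_T_FMA_iff[of k f0 f1 X m h \<omega>] by (simp add: not_le[symmetric])

lemma distr_LLR:
  assumes "distributed M lborel (X n) g"
    and [measurable]: "f0 \<in> borel_measurable borel" "f1 \<in> borel_measurable borel"
  shows "distr M borel (LLR f0 f1 X n) = distr (density lborel g) borel (\<lambda>x. ln (f1 x / f0 x))"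
proof -
  have X: "X n \<in> measurable M lborel" and law: "distr M lborel (X n) = density lborel g"
    using assms(1) by (auto simp: distributed_def)
  have "distr M borel (LLR f0 f1 X n) = distr M borel ((\<lambda>x. ln (f1 x / f0 x)) \<circ> X n)"
    by (simp add: LLR_def[abs_def] comp_def)
  also have "\<dots> = distr (distr M lborel (X n)) borel (\<lambda>x. ln (f1 x / f0 x))"
    by (rule distr_distr[symmetric]) (use X in auto)
  finally show ?thesis by (simp only: law)
qed

lemma P_fa_T_FMA_le:
  fixes P :: "enat \<Rightarrow> 'a measure"
  assumes "prob_space (P \<infinity>)"
    and indep: "prob_space.indep_vars (P \<infinity>) (\<lambda>_. borel) (LLR f0 f1 X) {1..}"
    and law: "\<And>i. 1 \<le> i \<Longrightarrow> distr (P \<infinity>) borel (LLR f0 f1 X i) = \<nu>"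
    and m: "1 \<le> m"
  shows "P_fa P (T_FMA f0 f1 X m h) ma \<le> 1 - measure (P \<infinity>) {\<omega>\<in>space (P \<infinity>). Swin f0 f1 X m m \<omega> < h} ^ ma"
proof -
  interpret prob_space "P \<infinity>" by fact
  let ?T = "T_FMA f0 f1 X m h" and ?S = "window_sum (LLR f0 f1 X) m"
  let ?p = "prob {\<omega>\<in>space (P \<infinity>). ?S m \<omega> < h}"
  have [measurable]: "?S n \<in> borel_measurable (P \<infinity>)" for n
    using indep m by (intro borel_measurable_window_sum) (auto simp: indep_vars_def)
  have "prob {\<omega>\<in>space (P \<infinity>). enat l \<le> ?T \<omega> \<and> ?T \<omega> < enat (l + ma)} \<le> 1 - ?p ^ ma" for l
  proof -
    define N where "N = {n. m \<le> n \<and> l \<le> n \<and> n < l + ma}"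
    define G where "G = {\<omega>\<in>space (P \<infinity>). \<forall>n\<in>N. ?S n \<omega> < h}"
    have N_window: "N \<subseteq> {l..<l + ma}" by (auto simp: N_def)
    then have N: "finite N" "N \<subseteq> {m..}" "card N \<le> ma"
      using finite_subset card_mono[OF _ N_window] by (auto simp: N_def)
    have G: "G \<in> events" unfolding G_def using N(1) by measurable
    \<comment> \<open>an alarm raised in the window {l..<l+ma} means that some window sum ending there reaches h\<close>
    have "{\<omega>\<in>space (P \<infinity>). enat l \<le> ?T \<omega> \<and> ?T \<omega> < enat (l + ma)} \<subseteq> space (P \<infinity>) - G"
      by (auto simp: G_def N_def enat_le_T_FMA_iff T_FMA_less_enat_iff Swin_eq_window_sum)
        (meson leI not_less)
    then have "prob {\<omega>\<in>space (P \<infinity>). enat l \<le> ?T \<omega> \<and> ?T \<omega> < enat (l + ma)} \<le> 1 - prob G"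
      using finite_measure_mono[of _ "space (P \<infinity>) - G"] prob_compl[OF G] G by simp
    also have "\<dots> \<le> 1 - ?p ^ card N"
      using prob_window_sums_less_ge_power[OF indep law m N(1,2)] by (simp add: G_def)
    also have "\<dots> \<le> 1 - ?p ^ ma"
      using N(3) by (simp add: power_decreasing)
    finally show ?thesis .
  qed
  then show ?thesis
    unfolding P_fa_def Swin_eq_window_sum by (intro cSUP_least) auto
qed

lemma P_md_T_FMA_le:
  fixes P :: "enat \<Rightarrow> 'a measure"
  assumes prob: "\<And>v. 1 \<le> v \<Longrightarrow> prob_space (P (enat v))"
    and indep: "\<And>v. 1 \<le> v \<Longrightarrow> prob_space.indep_vars (P (enat v)) (\<lambda>_. borel) (LLR f0 f1 X) {1..}"
    and law: "\<And>v i. 1 \<le> v \<Longrightarrow> v \<le> i \<Longrightarrow> i < v + m \<Longrightarrow> distr (P (enat v)) borel (LLR f0 f1 X i) = \<nu>"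
    and m: "1 \<le> m"
  shows "P_md P (T_FMA f0 f1 X m h) m \<le> measure (P 1) {\<omega>\<in>space (P 1). Swin f0 f1 X m m \<omega> < h}"
proof -
  let ?T = "T_FMA f0 f1 X m h" and ?S = "window_sum (LLR f0 f1 X) m"
  \<comment> \<open>the window ending at v + m - 1 is exactly the post-change block, whose law does not depend on v\<close>
  have window_prob: "measure (P (enat v)) {\<omega>\<in>space (P (enat v)). ?S (v + m - 1) \<omega> < h}
      = measure (PiM {1..m} (\<lambda>_. \<nu>)) {y\<in>space (PiM {1..m} (\<lambda>_. \<nu>)). (\<Sum>i\<in>{1..m}. y i) < h}"
    if v: "1 \<le> v" for v
    using m v by (intro prob_space.prob_window_sum_less[OF prob indep] law) auto
  have "cprob (P (enat v)) {\<omega>\<in>space (P (enat v)). enat (v + m) \<le> ?T \<omega>} {\<omega>\<in>space (P (enat v)). enat v \<le> ?T \<omega>}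
      \<le> measure (P 1) {\<omega>\<in>space (P 1). ?S m \<omega> < h}"
    if v: "1 \<le> v" for v
    using prob_space.cprob_window_sums_less_le[OF prob[OF v] indep[OF v] m v, of h]
      window_prob[OF v] window_prob[of 1] m
    by (simp add: enat_le_T_FMA_iff Swin_eq_window_sum one_enat_def)
  then show ?thesis
    unfolding P_md_def Swin_eq_window_sum by (intro cSUP_least) auto
qed

theorem theorem1:
  fixes m ma :: nat and h :: real
    and f0 f1 :: "real \<Rightarrow> real"
    and P :: "enat \<Rightarrow> 'a measure"
    and X :: "nat \<Rightarrow> 'a \<Rightarrow> real"
  assumes m: "m \<ge> 1" and ma: "ma \<ge> 1"
    and pdf0: "is_pdf f0" and pdf1: "is_pdf f1" and neq: "f0 \<noteq> f1"
    and prob: "\<And>v. v \<ge> 1 \<Longrightarrow> prob_space (P v)"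
    and indep: "\<And>v. v \<ge> 1 \<Longrightarrow> prob_space.indep_vars (P v) (\<lambda>_. borel) X {1..}"
    and distr: "\<And>v n. v \<ge> 1 \<Longrightarrow> n \<ge> 1 \<Longrightarrow>
        distributed (P v) lborel (X n)
          (\<lambda>x. ennreal (if v \<le> enat n \<and> enat n < v + enat m then f1 x else f0 x))"
    and llr_ok: "\<And>v n. v \<ge> 1 \<Longrightarrow> n \<ge> 1 \<Longrightarrow>
        AE \<omega> in P v. 0 < f0 (X n \<omega>) \<and> 0 < f1 (X n \<omega>)"
  shows "(P_fa P (T_FMA f0 f1 X m h) ma
           \<le> 1 - (measure (P \<infinity>) {\<omega> \<in> space (P \<infinity>). Swin f0 f1 X m m \<omega> < h}) ^ ma) \<and>
         (P_md P (T_FMA f0 f1 X m h) m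
           \<le> measure (P 1) {\<omega> \<in> space (P 1). Swin f0 f1 X m m \<omega> < h})"
proof -
  have f_measurable[measurable]: "f0 \<in> borel_measurable borel" "f1 \<in> borel_measurable borel"
    using pdf0 pdf1 by (auto simp: is_pdf_def)
  define \<nu> where "\<nu> f = distr (density lborel (\<lambda>x. ennreal (f x))) borel (\<lambda>x. ln (f1 x / f0 x))" for f :: "real \<Rightarrow> real"
  have law: "distr (P v) borel (LLR f0 f1 X n) = \<nu> (if v \<le> enat n \<and> enat n < v + enat m then f1 else f0)"
    if "1 \<le> v" "1 \<le> n" for v n
    using distr_LLR[where X=X, OF distr[OF that] f_measurable] by (auto simp: \<nu>_def)
  have indep_LLR: "prob_space.indep_vars (P v) (\<lambda>_. borel) (LLR f0 f1 X) {1..}" if "1 \<le> v" for v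
  proof -
    have "LLR f0 f1 X = (\<lambda>i \<omega>. ln (f1 (X i \<omega>) / f0 (X i \<omega>)))"
      by (simp add: fun_eq_iff LLR_def)
    then show ?thesis
      using prob_space.indep_vars_compose2[OF prob[OF that] indep[OF that],
          where Y="\<lambda>_ x. ln (f1 x / f0 x)" and N="\<lambda>_. borel"]
      by simp
  qed
  have "P_fa P (T_FMA f0 f1 X m h) ma
      \<le> 1 - measure (P \<infinity>) {\<omega>\<in>space (P \<infinity>). Swin f0 f1 X m m \<omega> < h} ^ ma"
    using law[of \<infinity>] by (intro P_fa_T_FMA_le prob indep_LLR m) auto
  moreover have "P_md P (T_FMA f0 f1 X m h) m \<le> measure (P 1) {\<omega>\<in>space (P 1). Swin f0 f1 X m m \<omega> < h}"
    using law by (intro P_md_T_FMA_le[where \<nu>="\<nu> f1"] prob indep_LLR m) (auto simp: one_enat_def)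
  ultimately show ?thesis ..
qed

end
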